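(* In the general public project problem (any $n\ge2$, any $c>0$, any cost shares $c_i>0$ with $\sum_i c_i=c$), there is no pay-only Groves mechanism that dominates the VCG mechanism.
   Context: General public project problem: $n\ge2$ players, decisions $D=\{0,1\}$, $\Theta_i=[0,c]$ with $c>0$, $v_i(d,\theta_i)=d(\theta_i-c_i)$ where $c_i>0$ and $\sum_ic_i=c$; efficient decision $f(\theta)=1$ iff $\sum_i\theta_i\ge c$. A Groves mechanism has taxes $t_i(\theta)=\sum_{j\ne i}v_j(f(\theta),\theta_j)+h_i(\theta_{-i})$ for arbitrary $h_i$; player $i$'s utility is $v_i(f(\theta),\theta_i)+t_i(\theta)$. The VCG (Clarke) mechanism uses $h_i(\theta_{-i})=-\max_{d\in D}\sum_{j\ne i}v_j(d,\theta_j)$. Pay-only: $t_i(\theta)\le0$ for all $\theta,i$. $t'$ dominates $t$ if $t_i(\theta)\le t'_i(\theta)$ for all $\theta,i$, strictly for some $\theta,i$. *)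

theory Defs
  imports Main "HOL-Analysis.Analysis"
begin

text \<open>Players are 0,...,n-1. A type profile is theta :: nat => real; only the
entries i < n matter. Decisions D = {0,1} are represented as reals 0 and 1.\<close>

definition profiles :: "nat \<Rightarrow> real \<Rightarrow> (nat \<Rightarrow> real) set" where
  "profiles n c = {\<theta>. \<forall>i<n. \<theta> i \<in> {0..c}}"

definition valuation :: "(nat \<Rightarrow> real) \<Rightarrow> nat \<Rightarrow> real \<Rightarrow> real \<Rightarrow> real" where
  "valuation cs i d \<theta>i = d * (\<theta>i - cs i)"

definition decision :: "nat \<Rightarrow> real \<Rightarrow> (nat \<Rightarrow> real) \<Rightarrow> real" where
  "decision n c \<theta> = (if (\<Sum>i<n. \<theta> i) \<ge> c then 1 else 0)"

definition depends_only_on_others ::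
  "nat \<Rightarrow> real \<Rightarrow> (nat \<Rightarrow> (nat \<Rightarrow> real) \<Rightarrow> real) \<Rightarrow> bool" where
  "depends_only_on_others n c h \<longleftrightarrow>
     (\<forall>i<n. \<forall>\<theta>\<in>profiles n c. \<forall>\<theta>'\<in>profiles n c.
        (\<forall>j<n. j \<noteq> i \<longrightarrow> \<theta> j = \<theta>' j) \<longrightarrow> h i \<theta> = h i \<theta>')"

definition groves_tax ::
  "nat \<Rightarrow> real \<Rightarrow> (nat \<Rightarrow> real) \<Rightarrow> (nat \<Rightarrow> (nat \<Rightarrow> real) \<Rightarrow> real)
     \<Rightarrow> nat \<Rightarrow> (nat \<Rightarrow> real) \<Rightarrow> real" where
  "groves_tax n c cs h i \<theta> =
     (\<Sum>j\<in>{..<n} - {i}. valuation cs j (decision n c \<theta>) (\<theta> j)) + h i \<theta>"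

definition vcg_h :: "nat \<Rightarrow> (nat \<Rightarrow> real) \<Rightarrow> nat \<Rightarrow> (nat \<Rightarrow> real) \<Rightarrow> real" where
  "vcg_h n cs i \<theta> =
     - Max ((\<lambda>d. \<Sum>j\<in>{..<n} - {i}. valuation cs j d (\<theta> j)) ` {0, 1})"

definition pay_only ::
  "nat \<Rightarrow> real \<Rightarrow> (nat \<Rightarrow> (nat \<Rightarrow> real) \<Rightarrow> real) \<Rightarrow> bool" where
  "pay_only n c t \<longleftrightarrow> (\<forall>\<theta>\<in>profiles n c. \<forall>i<n. t i \<theta> \<le> 0)"

definition dominates ::
  "nat \<Rightarrow> real \<Rightarrow> (nat \<Rightarrow> (nat \<Rightarrow> real) \<Rightarrow> real)
     \<Rightarrow> (nat \<Rightarrow> (nat \<Rightarrow> real) \<Rightarrow> real) \<Rightarrow> bool" where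
  "dominates n c t' t \<longleftrightarrow>
     (\<forall>\<theta>\<in>profiles n c. \<forall>i<n. t i \<theta> \<le> t' i \<theta>) \<and>
     (\<exists>\<theta>\<in>profiles n c. \<exists>i<n. t i \<theta> < t' i \<theta>)"

end

theory Submission
  imports Defs
begin

(* Write S_i(theta) for the surplus of the players other than i,
   sum_{j ~= i} (theta_j - c_j).  The VCG charge is h_i = -max(0, S_i).
   For any Groves mechanism with h_i depending only on theta_{-i}, the tax of
   player i at the profile where i reports x is d * S_i + h_i(theta_{-i}),
   with d the efficient decision there.  Pay-only forces this to be <= 0 for
   every report x, so h_i <= -d * S_i for every decision that player i can
   enforce unilaterally.  Reporting c enforces d = 1 (useful when S_i >= 0),
   reporting 0 enforces d = 0 (useful when S_i < 0, since then the others'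
   reports fall short of c).  Hence h_i <= -max(0, S_i) = VCG charge at every
   profile, so no pay-only Groves tax can strictly exceed the VCG tax anywhere,
   i.e. none dominates VCG. *)

definition others_surplus :: "nat \<Rightarrow> (nat \<Rightarrow> real) \<Rightarrow> nat \<Rightarrow> (nat \<Rightarrow> real) \<Rightarrow> real" where
  "others_surplus n cs i \<theta> = (\<Sum>j\<in>{..<n} - {i}. \<theta> j - cs j)"

lemma sum_valuation:
  "(\<Sum>j\<in>A. valuation cs j d (\<theta> j)) = d * (\<Sum>j\<in>A. \<theta> j - cs j)"
  by (simp add: valuation_def sum_distrib_left)

lemma vcg_h_eq: "vcg_h n cs i \<theta> = - max 0 (others_surplus n cs i \<theta>)"
  unfolding vcg_h_def sum_valuation others_surplus_def by (simp add: max_def)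

lemma groves_tax_diff:
  "groves_tax n c cs h i \<theta> - groves_tax n c cs h' i \<theta> = h i \<theta> - h' i \<theta>"
  by (simp add: groves_tax_def)

lemma profiles_update:
  assumes "\<theta> \<in> profiles n c" and "x \<in> {0..c}"
  shows "\<theta>(i := x) \<in> profiles n c"
  using assms by (auto simp: profiles_def)

lemma others_sum_update:
  fixes \<theta> :: "nat \<Rightarrow> real"
  shows "(\<Sum>j\<in>{..<n} - {i}. f j ((\<theta>(i := x)) j)) = (\<Sum>j\<in>{..<n} - {i}. f j (\<theta> j))"
  by (intro sum.cong) auto

lemma total_report_update:
  fixes \<theta> :: "nat \<Rightarrow> real"
  assumes "i < n"
  shows "(\<Sum>k<n. (\<theta>(i := x)) k) = x + (\<Sum>j\<in>{..<n} - {i}. \<theta> j)"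
  using assms others_sum_update[where f = "\<lambda>_ t. t" and \<theta> = \<theta>]
  by (subst sum.remove[of _ i]) auto

lemma depends_only_on_others_update:
  assumes "depends_only_on_others n c h" and "i < n"
    and "\<theta> \<in> profiles n c" and "x \<in> {0..c}"
  shows "h i (\<theta>(i := x)) = h i \<theta>"
  using assms profiles_update[OF assms(3,4)] unfolding depends_only_on_others_def
  by (metis fun_upd_other)

lemma pay_only_bound:
  assumes dep: "depends_only_on_others n c h"
    and po: "pay_only n c (groves_tax n c cs h)"
    and \<theta>: "\<theta> \<in> profiles n c" and i: "i < n" and x: "x \<in> {0..c}"
  shows "h i \<theta> \<le> - decision n c (\<theta>(i := x)) * others_surplus n cs i \<theta>"
proof -
  let ?\<theta>' = "\<theta>(i := x)"
  have "groves_tax n c cs h i ?\<theta>' \<le> 0"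
    using po profiles_update[OF \<theta> x] i by (auto simp: pay_only_def)
  moreover have "groves_tax n c cs h i ?\<theta>'
      = decision n c ?\<theta>' * others_surplus n cs i \<theta> + h i \<theta>"
    unfolding groves_tax_def sum_valuation others_surplus_def
      others_sum_update[where f = "\<lambda>j t. t - cs j"]
      depends_only_on_others_update[OF dep i \<theta> x] ..
  ultimately show ?thesis by simp
qed

lemma decision_report_max:
  assumes \<theta>: "\<theta> \<in> profiles n c" and i: "i < n"
  shows "decision n c (\<theta>(i := c)) = 1"
proof -
  have "0 \<le> (\<Sum>j\<in>{..<n} - {i}. \<theta> j)"
    using \<theta> by (intro sum_nonneg) (auto simp: profiles_def)
  then show ?thesis
    unfolding decision_def total_report_update[OF i] by simp
qed

lemma decision_report_zero:
  assumes cs: "\<forall>j<n. 0 \<le> cs j" and csum: "(\<Sum>j<n. cs j) = c"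
    and i: "i < n" and neg: "others_surplus n cs i \<theta> < 0"
  shows "decision n c (\<theta>(i := 0)) = 0"
proof -
  have "(\<Sum>j\<in>{..<n} - {i}. \<theta> j) < (\<Sum>j\<in>{..<n} - {i}. cs j)"
    using neg by (simp add: others_surplus_def sum_subtractf)
  also have "\<dots> = c - cs i"
    using i csum by (simp add: sum_diff1)
  also have "\<dots> \<le> c"
    using cs i by simp
  finally show ?thesis
    unfolding decision_def total_report_update[OF i] by simp
qed

lemma pay_only_groves_h_le_vcg_h:
  assumes cs: "\<forall>j<n. 0 \<le> cs j" and csum: "(\<Sum>j<n. cs j) = c"
    and dep: "depends_only_on_others n c h"
    and po: "pay_only n c (groves_tax n c cs h)"
    and \<theta>: "\<theta> \<in> profiles n c" and i: "i < n"
  shows "h i \<theta> \<le> vcg_h n cs i \<theta>"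
proof (cases "0 \<le> others_surplus n cs i \<theta>")
  case True
  have "c \<in> {0..c}"
    using \<theta> i by (auto simp: profiles_def)
  from pay_only_bound[OF dep po \<theta> i this] True show ?thesis
    by (simp add: decision_report_max[OF \<theta> i] vcg_h_eq)
next
  case False
  have "0 \<in> {0..c}"
    using \<theta> i by (auto simp: profiles_def)
  from pay_only_bound[OF dep po \<theta> i this] False show ?thesis
    by (simp add: decision_report_zero[OF cs csum i] vcg_h_eq)
qed

theorem theorem4:
  fixes n :: nat and c :: real and cs :: "nat \<Rightarrow> real"
  assumes "n \<ge> 2" and "c > 0"
    and "\<forall>i<n. cs i > 0" and "(\<Sum>i<n. cs i) = c"
  shows "\<not> (\<exists>h. depends_only_on_others n c h
               \<and> pay_only n c (groves_tax n c cs h)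
               \<and> dominates n c (groves_tax n c cs h) (groves_tax n c cs (vcg_h n cs)))"
proof
  assume "\<exists>h. depends_only_on_others n c h
               \<and> pay_only n c (groves_tax n c cs h)
               \<and> dominates n c (groves_tax n c cs h) (groves_tax n c cs (vcg_h n cs))"
  then obtain h where dep: "depends_only_on_others n c h"
    and po: "pay_only n c (groves_tax n c cs h)"
    and dom: "dominates n c (groves_tax n c cs h) (groves_tax n c cs (vcg_h n cs))"
    by blast
  from dom obtain \<theta> i where \<theta>: "\<theta> \<in> profiles n c" and i: "i < n"
    and strict: "groves_tax n c cs (vcg_h n cs) i \<theta> < groves_tax n c cs h i \<theta>"
    unfolding dominates_def by blast
  have cs: "\<forall>j<n. 0 \<le> cs j"
    using assms(3) by (simp add: less_imp_le)
  have "h i \<theta> \<le> vcg_h n cs i \<theta>"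
    using pay_only_groves_h_le_vcg_h[OF cs assms(4) dep po \<theta> i] .
  with strict show False
    using groves_tax_diff[of n c cs h i \<theta> "vcg_h n cs"] by linarith
qed

end
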